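(* Let $\beta>0$ and $k<0$ (so in particular $k<0<\frac{3}{3+\beta}$). Let \[f_{++}(x,y,z)=\beta(x^2y^2+y^2z^2+x^2z^2)+\Big(x^2+y^2+z^2+\tfrac12\Big)^2-\tfrac{1-k}{4}.\] Then the zero set $Q^{++}(k)=\{(x,y,z)\in\mathbb{R}^3: f_{++}(x,y,z)=0\}$ is a connected compact surface homeomorphic to a sphere.
   Context: $Q^{++}(k)$ is an octahedral quartic, i.e. $f_{++}$ is invariant under the group of $3\times 3$ signed permutation matrices. *)

theory Defs
  imports "HOL-Analysis.Analysis"
begin

definition f_pp :: "real \<Rightarrow> real \<Rightarrow> real ^ 3 \<Rightarrow> real" where
  "f_pp \<beta> k p = (let x = p $ 1; y = p $ 2; z = p $ 3 in
     \<beta> * (x^2 * y^2 + y^2 * z^2 + x^2 * z^2) + (x^2 + y^2 + z^2 + 1/2)^2 - (1 - k) / 4)"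

definition Q_pp :: "real \<Rightarrow> real \<Rightarrow> (real ^ 3) set" where
  "Q_pp \<beta> k = {p. f_pp \<beta> k p = 0}"

end

theory Submission
  imports Defs
begin

text \<open>Along the ray through a unit vector \<open>u\<close>, \<open>f\<^sub>+\<^sub>+(r u) = a(u) s\<^sup>2 + s + k/4\<close> with
  \<open>s = r\<^sup>2\<close> and \<open>a(u) = \<beta>(u\<^sub>1\<^sup>2u\<^sub>2\<^sup>2 + u\<^sub>2\<^sup>2u\<^sub>3\<^sup>2 + u\<^sub>1\<^sup>2u\<^sub>3\<^sup>2) + 1 \<ge> 1\<close>. For \<open>k < 0\<close> this quadratic in \<open>s\<close>
  has exactly one positive root, depending continuously on \<open>u\<close>, so \<open>Q\<^sup>+\<^sup>+(k)\<close> is the graph of a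
  positive continuous radius function over the unit sphere.\<close>

lemma radial_graph_homeomorphic_sphere:
  fixes \<rho> :: "'a::euclidean_space \<Rightarrow> real"
  assumes cont: "continuous_on (sphere 0 1) \<rho>" and pos: "\<And>u. u \<in> sphere 0 1 \<Longrightarrow> \<rho> u > 0"
  shows "(\<lambda>u. \<rho> u *\<^sub>R u) ` sphere 0 1 homeomorphic sphere (0::'a) 1"
proof -
  have "inj_on (\<lambda>u. \<rho> u *\<^sub>R u) (sphere 0 1)"
  proof
    fix u v :: 'a
    assume u: "u \<in> sphere 0 1" and v: "v \<in> sphere 0 1" and eq: "\<rho> u *\<^sub>R u = \<rho> v *\<^sub>R v"
    have "\<rho> u = \<rho> v"
      using arg_cong[OF eq, of norm] u v pos[OF u] pos[OF v] by simp
    then show "u = v"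
      using eq pos[OF u] by simp
  qed
  moreover have "continuous_on (sphere 0 1) (\<lambda>u. \<rho> u *\<^sub>R u)"
    using cont by (intro continuous_intros)
  ultimately show ?thesis
    using homeomorphic_compact[OF compact_sphere _ refl] homeomorphic_sym by blast
qed

definition quadratic_pos_root :: "real \<Rightarrow> real \<Rightarrow> real" where
  "quadratic_pos_root a c = (sqrt (1 - 4 * a * c) - 1) / (2 * a)"

lemma quadratic_pos_root:
  fixes a c :: real
  assumes "a > 0" "c < 0"
  shows "quadratic_pos_root a c > 0"
    and "a * (quadratic_pos_root a c)\<^sup>2 + quadratic_pos_root a c + c = 0"
proof -
  have disc: "1 - 4 * a * c > 1"
    using assms by (simp add: mult_pos_neg)
  then show "quadratic_pos_root a c > 0"
    using assms(1) by (simp add: quadratic_pos_root_def)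
  have "(sqrt (1 - 4 * a * c))\<^sup>2 = 1 - 4 * a * c"
    using disc by simp
  then show "a * (quadratic_pos_root a c)\<^sup>2 + quadratic_pos_root a c + c = 0"
    using assms(1) by (simp add: quadratic_pos_root_def field_simps power2_eq_square)
qed

lemma quadratic_nonneg_root_unique:
  fixes a c s :: real
  assumes "a > 0" "c < 0" "s \<ge> 0" "a * s\<^sup>2 + s + c = 0"
  shows "s = quadratic_pos_root a c"
proof -
  define t where "t = quadratic_pos_root a c"
  have t: "t > 0" "a * t\<^sup>2 + t + c = 0"
    using quadratic_pos_root[OF assms(1,2)] by (simp_all add: t_def)
  have "(s - t) * (a * (s + t) + 1) = 0"
    using assms(4) t(2) by (simp add: algebra_simps power2_eq_square)
  moreover have "a * (s + t) + 1 > 0"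
    using assms(1,3) t(1) by (simp add: add_pos_nonneg)
  ultimately show ?thesis
    by (simp add: t_def)
qed

definition quartic_coeff :: "real \<Rightarrow> real ^ 3 \<Rightarrow> real" where
  "quartic_coeff \<beta> u = \<beta> * (u$1^2 * u$2^2 + u$2^2 * u$3^2 + u$1^2 * u$3^2) + 1"

lemma quartic_coeff_ge_1: "\<beta> \<ge> 0 \<Longrightarrow> quartic_coeff \<beta> u \<ge> 1"
  by (simp add: quartic_coeff_def)

lemma f_pp_scaleR_unit:
  assumes "norm u = 1"
  shows "f_pp \<beta> k (r *\<^sub>R u) = quartic_coeff \<beta> u * (r\<^sup>2)\<^sup>2 + r\<^sup>2 + k / 4"
proof -
  have "u$1^2 + u$2^2 + u$3^2 = 1"
    using assms unfolding norm_eq_sqrt_inner by (simp add: inner_vec_def sum_3 power2_eq_square)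
  then have "(r\<^sup>2 * u$1^2 + r\<^sup>2 * u$2^2 + r\<^sup>2 * u$3^2 + 1/2)\<^sup>2 = (r\<^sup>2 + 1/2)\<^sup>2"
    by (metis distrib_left mult.right_neutral)
  then show ?thesis
    by (simp add: f_pp_def quartic_coeff_def power_mult_distrib power2_eq_square field_simps)
qed

lemma Q_pp_radial_graph:
  assumes "\<beta> \<ge> 0" "k < 0"
  shows "Q_pp \<beta> k = (\<lambda>u. sqrt (quadratic_pos_root (quartic_coeff \<beta> u) (k / 4)) *\<^sub>R u) ` sphere 0 1"
    (is "_ = ?\<rho> ` _")
proof -
  let ?t = "\<lambda>u. quadratic_pos_root (quartic_coeff \<beta> u) (k / 4)"
  have a_pos: "quartic_coeff \<beta> u > 0" for u
    using quartic_coeff_ge_1[OF assms(1)] by (smt (verit))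
  have on_ray: "r *\<^sub>R u \<in> Q_pp \<beta> k \<longleftrightarrow> r\<^sup>2 = ?t u" if "norm u = 1" for r u
  proof -
    have "r *\<^sub>R u \<in> Q_pp \<beta> k \<longleftrightarrow> quartic_coeff \<beta> u * (r\<^sup>2)\<^sup>2 + r\<^sup>2 + k / 4 = 0"
      using f_pp_scaleR_unit[OF that] by (simp add: Q_pp_def)
    also have "\<dots> \<longleftrightarrow> r\<^sup>2 = ?t u"
    proof
      assume "quartic_coeff \<beta> u * (r\<^sup>2)\<^sup>2 + r\<^sup>2 + k / 4 = 0"
      then show "r\<^sup>2 = ?t u"
        using quadratic_nonneg_root_unique[OF a_pos, of "k/4" "r\<^sup>2"] assms(2) by simp
    next
      assume "r\<^sup>2 = ?t u"
      then show "quartic_coeff \<beta> u * (r\<^sup>2)\<^sup>2 + r\<^sup>2 + k / 4 = 0"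
        using quadratic_pos_root(2)[OF a_pos, of "k/4"] assms(2) by simp
    qed
    finally show ?thesis .
  qed
  show ?thesis
  proof (intro equalityI subsetI)
    fix p assume p: "p \<in> Q_pp \<beta> k"
    have "p \<noteq> 0"
      using p assms(2) by (auto simp: Q_pp_def f_pp_def power2_eq_square)
    define v where "v = p /\<^sub>R norm p"
    have v: "norm v = 1" and pv: "norm p *\<^sub>R v = p"
      using \<open>p \<noteq> 0\<close> by (simp_all add: v_def)
    then have "(norm p)\<^sup>2 = ?t v"
      using on_ray p by metis
    then have "sqrt (?t v) = norm p"
      by (simp add: real_sqrt_unique)
    then have "p = ?\<rho> v"
      by (simp add: pv)
    with v show "p \<in> ?\<rho> ` sphere 0 1"
      by simp
  next
    fix p assume "p \<in> ?\<rho> ` sphere 0 1"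
    then obtain u where "norm u = 1" "p = ?\<rho> u"
      by auto
    moreover have "(sqrt (?t u))\<^sup>2 = ?t u"
      using quadratic_pos_root(1)[OF a_pos, of "k/4"] assms(2) by (simp add: less_imp_le)
    ultimately show "p \<in> Q_pp \<beta> k"
      using on_ray by blast
  qed
qed

theorem lemma1:
  fixes \<beta> k :: real
  assumes "\<beta> > 0" and "k < 0"
  shows "connected (Q_pp \<beta> k) \<and> compact (Q_pp \<beta> k) \<and>
         Q_pp \<beta> k homeomorphic sphere (0 :: real ^ 3) 1"
proof -
  define \<rho> where "\<rho> u = sqrt (quadratic_pos_root (quartic_coeff \<beta> u) (k / 4))" for u
  have a_pos: "quartic_coeff \<beta> u > 0" for u
    using quartic_coeff_ge_1[of \<beta> u] assms(1) by simp
  have "continuous_on (sphere 0 1) \<rho>"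
    unfolding \<rho>_def quadratic_pos_root_def quartic_coeff_def
    using a_pos unfolding quartic_coeff_def by (intro continuous_intros) (smt (verit))
  moreover have "\<rho> u > 0" for u
    using quadratic_pos_root(1)[OF a_pos] assms(2) by (simp add: \<rho>_def)
  ultimately have "(\<lambda>u. \<rho> u *\<^sub>R u) ` sphere 0 1 homeomorphic sphere (0 :: real ^ 3) 1"
    using radial_graph_homeomorphic_sphere by blast
  then have "Q_pp \<beta> k homeomorphic sphere (0 :: real ^ 3) 1"
    using Q_pp_radial_graph[of \<beta> k] assms unfolding \<rho>_def by simp
  moreover have "connected (sphere (0 :: real ^ 3) 1)"
    by (simp add: connected_sphere)
  ultimately show ?thesis
    using homeomorphic_compactness homeomorphic_connectedness compact_sphere by blast
qed

end
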